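(* Let $h\in\mathcal{C}_+([0,1])$. For all $a>0$, \[ 2\int_0^1ds\int_0^{h(s)}dr\,\sigma_{r,s}(h)^a=a(a+1)\int_{[0,1]^2}|s'-s|^{a-1}\,m_h(s,s')\,ds\,ds'. \]
   Context: $\mathcal{C}_+([0,1])$ is the set of non-negative continuous functions on $[0,1]$. For $h\in\mathcal{C}_+([0,1])$ and $s,t\in[0,1]$: $m_h(s,t)=\inf_{u\in[s\wedge t,s\vee t]}h(u)$ and $\sigma_{r,s}(h)=\int_0^1\mathbf{1}_{\{m_h(s,t)\ge r\}}dt$. *)

theory Defs
  imports "HOL-Analysis.Analysis"
begin

definition mh :: "(real \<Rightarrow> real) \<Rightarrow> real \<Rightarrow> real \<Rightarrow> real" where
  "mh h s t = (INF u\<in>{min s t..max s t}. h u)"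

definition sigma_rs :: "real \<Rightarrow> real \<Rightarrow> (real \<Rightarrow> real) \<Rightarrow> real" where
  "sigma_rs r s h = (LINT t:{0..1}|lborel. (if mh h s t \<ge> r then 1 else 0))"

end

theory Submission
  imports Defs
begin

text \<open>For fixed \<open>r\<close> the relation \<open>m_h(s,t) \<ge> r\<close> on \<open>[0,1]\<close> is symmetric and transitive,
  and by continuity of \<open>h\<close> its classes are compact intervals; \<open>\<sigma>_{r,s}(h)\<close> is the length of the
  class of \<open>s\<close>. On a single class \<open>[\<alpha>,\<beta>]\<close> both \<open>\<integral>\<integral>|t-s|^(a-1)\<close> and
  \<open>2/(a(a+1)) \<integral>\<sigma>^a\<close> equal \<open>2(\<beta>-\<alpha>)^(a+1)/(a(a+1))\<close>. To sum this over the (possibly uncountably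
  many) classes, the mass at each point is spread uniformly over its class and Fubini's theorem is
  applied. Integrating over \<open>r \<ge> 0\<close> then gives the theorem, because \<open>m_h(s,t)\<close> is the length of
  \<open>{r \<ge> 0. m_h(s,t) \<ge> r}\<close>.\<close>

lemma nn_integral_powr_from_left:
  fixes b \<alpha> \<beta> :: real
  assumes "b > 0" and "\<alpha> \<le> \<beta>"
  shows "(\<integral>\<^sup>+t. indicator {\<alpha>..\<beta>} t * ennreal ((t - \<alpha>) powr (b - 1)) \<partial>lborel) = ennreal ((\<beta> - \<alpha>) powr b / b)"
proof -
  have "((\<lambda>x. x powr (b - 1)) has_integral ((\<beta> - \<alpha>) powr b / b)) {0..\<beta> - \<alpha>}"
    using has_integral_powr_from_0[of "b - 1" "\<beta> - \<alpha>"] assms by simp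
  then have "(\<integral>\<^sup>+x. ennreal (x powr (b - 1)) * indicator {0..\<beta> - \<alpha>} x \<partial>lborel) = ennreal ((\<beta> - \<alpha>) powr b / b)"
    by (subst nn_integral_has_integral_lebesgue') auto
  moreover have "(\<integral>\<^sup>+t. indicator {\<alpha>..\<beta>} t * ennreal ((t - \<alpha>) powr (b - 1)) \<partial>lborel)
      = (\<integral>\<^sup>+x. ennreal (x powr (b - 1)) * indicator {0..\<beta> - \<alpha>} x \<partial>lborel)"
    by (subst nn_integral_real_affine[where c=1 and t=\<alpha>]) (auto simp: indicator_def mult.commute intro!: nn_integral_cong)
  ultimately show ?thesis by simp
qed

lemma nn_integral_powr_from_right:
  fixes b \<alpha> \<beta> :: real
  assumes "b > 0" and "\<alpha> \<le> \<beta>"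
  shows "(\<integral>\<^sup>+t. indicator {\<alpha>..\<beta>} t * ennreal ((\<beta> - t) powr (b - 1)) \<partial>lborel) = ennreal ((\<beta> - \<alpha>) powr b / b)"
proof -
  have "(\<integral>\<^sup>+t. indicator {\<alpha>..\<beta>} t * ennreal ((\<beta> - t) powr (b - 1)) \<partial>lborel)
      = (\<integral>\<^sup>+t. indicator {-\<beta>..-\<alpha>} t * ennreal ((t - (-\<beta>)) powr (b - 1)) \<partial>lborel)"
    by (subst nn_integral_real_affine[where c="-1" and t=0]) (auto simp: indicator_def intro!: nn_integral_cong)
  then show ?thesis
    using nn_integral_powr_from_left[of b "-\<beta>" "-\<alpha>"] assms by simp
qed

lemma nn_integral_abs_powr_interval:
  fixes a s \<alpha> \<beta> :: real
  assumes "a > 0" and "\<alpha> \<le> s" and "s \<le> \<beta>"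
  shows "(\<integral>\<^sup>+t. indicator {\<alpha>..\<beta>} t * ennreal (\<bar>t - s\<bar> powr (a - 1)) \<partial>lborel)
     = ennreal (((s - \<alpha>) powr a + (\<beta> - s) powr a) / a)"
proof -
  have "(\<integral>\<^sup>+t. indicator {\<alpha>..\<beta>} t * ennreal (\<bar>t - s\<bar> powr (a - 1)) \<partial>lborel)
     = (\<integral>\<^sup>+t. indicator {\<alpha>..s} t * ennreal ((s - t) powr (a - 1))
             + indicator {s..\<beta>} t * ennreal ((t - s) powr (a - 1)) \<partial>lborel)"
    using assms by (intro nn_integral_cong) (auto simp: indicator_def abs_if)
  also have "\<dots> = ennreal ((s - \<alpha>) powr a / a) + ennreal ((\<beta> - s) powr a / a)"
    using assms by (simp add: nn_integral_add nn_integral_powr_from_left nn_integral_powr_from_right)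
  finally show ?thesis
    using assms by (simp add: add_divide_distrib flip: ennreal_plus)
qed

locale interval_classes =
  fixes E :: "real rel"
  assumes sets_E [measurable]: "E \<in> sets borel"
    and sym_E: "sym E"
    and trans_E: "trans E"
    and class_interval: "\<exists>\<alpha> \<beta>. E `` {s} = {\<alpha>..\<beta>}"
begin

lemma sets_E_prod [measurable]: "E \<in> sets (borel \<Otimes>\<^sub>M borel)"
  by (subst borel_prod) (rule sets_E)

definition class_length :: "real \<Rightarrow> real" where
  "class_length s = measure lborel (E `` {s})"

lemma indicator_class: "indicator E (s, t) = indicator (E `` {s}) t"
  by (simp add: indicator_def)

lemma class_eq: "(s, t) \<in> E \<Longrightarrow> E `` {t} = E `` {s}"
  using sym_E trans_E by (auto dest: symD transD)

lemma class_cases: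
  obtains "E `` {s} = {}" "class_length s = 0"
  | \<alpha> \<beta> where "\<alpha> \<le> s" "s \<le> \<beta>" "E `` {s} = {\<alpha>..\<beta>}" "class_length s = \<beta> - \<alpha>"
proof (cases "E `` {s} = {}")
  case True
  then show ?thesis using that(1) by (simp add: class_length_def)
next
  case False
  then obtain t where "(s, t) \<in> E" by auto
  moreover from this obtain \<alpha> \<beta> where "E `` {s} = {\<alpha>..\<beta>}" using class_interval by blast
  moreover from calculation have "s \<in> E `` {s}" using sym_E trans_E by (blast dest: symD transD)
  ultimately show ?thesis using that(2)[of \<alpha> \<beta>] by (simp add: class_length_def)
qed

lemma borel_measurable_class_length [measurable]: "class_length \<in> borel_measurable borel"
proof -
  have "(\<lambda>s. emeasure lborel (Pair s -` E)) \<in> borel_measurable lborel"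
    by (rule lborel.measurable_emeasure_Pair) (simp add: lborel_prod)
  moreover have "Pair s -` E = E `` {s}" for s by auto
  ultimately show ?thesis
    unfolding class_length_def measure_def by simp
qed

lemma nn_integral_by_classes:
  fixes g :: "real \<Rightarrow> ennreal"
  assumes [measurable]: "g \<in> borel_measurable borel"
    and null: "\<And>s. class_length s = 0 \<Longrightarrow> g s = 0"
  shows "(\<integral>\<^sup>+s. g s \<partial>lborel)
     = (\<integral>\<^sup>+t. ennreal (1 / class_length t) * (\<integral>\<^sup>+s. indicator E (s, t) * g s \<partial>lborel) \<partial>lborel)"
proof -
  \<comment> \<open>Spread the mass \<open>g s\<close> uniformly over the class of \<open>s\<close>; on null classes the junk value
      \<open>1 / 0 = 0\<close> is harmless because \<open>g\<close> vanishes there.\<close>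
  have spread: "g s = (\<integral>\<^sup>+t. indicator E (s, t) * (g s * ennreal (1 / class_length s)) \<partial>lborel)" for s
  proof (cases s rule: class_cases)
    case 1
    then show ?thesis by (simp add: null)
  next
    case (2 \<alpha> \<beta>)
    have "(\<integral>\<^sup>+t. indicator E (s, t) * (g s * ennreal (1 / class_length s)) \<partial>lborel)
        = ennreal (\<beta> - \<alpha>) * (g s * ennreal (1 / (\<beta> - \<alpha>)))"
      using 2 by (simp add: nn_integral_multc indicator_class)
    also have "\<dots> = g s"
    proof (cases "\<alpha> < \<beta>")
      case True
      then have "ennreal (\<beta> - \<alpha>) * ennreal (1 / (\<beta> - \<alpha>)) = 1"
        by (simp flip: ennreal_mult)
      then show ?thesis by (metis mult.assoc mult.commute mult_1)
    next
      case False
      then show ?thesis using 2 null by simp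
    qed
    finally show ?thesis by simp
  qed
  have "(\<integral>\<^sup>+s. g s \<partial>lborel)
      = (\<integral>\<^sup>+s. \<integral>\<^sup>+t. indicator E (s, t) * (g s * ennreal (1 / class_length s)) \<partial>lborel \<partial>lborel)"
    by (subst spread) simp
  also have "\<dots> = (\<integral>\<^sup>+t. \<integral>\<^sup>+s. indicator E (s, t) * (g s * ennreal (1 / class_length s)) \<partial>lborel \<partial>lborel)"
    by (rule lborel_pair.Fubini'[symmetric]) measurable
  also have "\<dots> = (\<integral>\<^sup>+t. \<integral>\<^sup>+s. ennreal (1 / class_length t) * (indicator E (s, t) * g s) \<partial>lborel \<partial>lborel)"
    by (intro nn_integral_cong) (auto simp: indicator_def class_length_def class_eq mult_ac)
  finally show ?thesis by (simp add: nn_integral_cmult)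
qed

lemma nn_integral_abs_powr_class:
  assumes "a > 0" and "\<alpha> \<le> s" and "s \<le> \<beta>" and "E `` {s} = {\<alpha>..\<beta>}"
  shows "(\<integral>\<^sup>+t. indicator E (s, t) * ennreal (\<bar>t - s\<bar> powr (a - 1)) \<partial>lborel)
       = ennreal (((s - \<alpha>) powr a + (\<beta> - s) powr a) / a)"
  using assms by (simp add: indicator_class nn_integral_abs_powr_interval)

lemma nn_integral_abs_powr_class_square:
  assumes a: "a > 0" and "\<alpha> \<le> t" and "t \<le> \<beta>" and class_t: "E `` {t} = {\<alpha>..\<beta>}"
  shows "(\<integral>\<^sup>+s. indicator E (s, t) * (\<integral>\<^sup>+u. indicator E (s, u) * ennreal (\<bar>u - s\<bar> powr (a - 1)) \<partial>lborel) \<partial>lborel)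
       = ennreal (2 * (\<beta> - \<alpha>) powr (a + 1) / (a * (a + 1)))"
proof -
  have pointwise: "indicator E (s, t) * (\<integral>\<^sup>+u. indicator E (s, u) * ennreal (\<bar>u - s\<bar> powr (a - 1)) \<partial>lborel)
      = (indicator {\<alpha>..\<beta>} s * ennreal ((s - \<alpha>) powr (a + 1 - 1))
         + indicator {\<alpha>..\<beta>} s * ennreal ((\<beta> - s) powr (a + 1 - 1))) * ennreal (1 / a)" for s
  proof (cases "s \<in> {\<alpha>..\<beta>}")
    case True
    then have "(t, s) \<in> E" using class_t by auto
    then have "(s, t) \<in> E" and "E `` {s} = {\<alpha>..\<beta>}"
      using sym_E class_t class_eq by (auto dest: symD)
    with True a show ?thesis
      by (simp add: nn_integral_abs_powr_class divide_simps flip: ennreal_plus ennreal_mult)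
  next
    case False
    then have "(s, t) \<notin> E" using class_t sym_E by (auto dest: symD)
    with False show ?thesis by simp
  qed
  have "(\<integral>\<^sup>+s. indicator E (s, t) * (\<integral>\<^sup>+u. indicator E (s, u) * ennreal (\<bar>u - s\<bar> powr (a - 1)) \<partial>lborel) \<partial>lborel)
      = (ennreal ((\<beta> - \<alpha>) powr (a + 1) / (a + 1)) + ennreal ((\<beta> - \<alpha>) powr (a + 1) / (a + 1))) * ennreal (1 / a)"
    using nn_integral_powr_from_left[of "a + 1" \<alpha> \<beta>] nn_integral_powr_from_right[of "a + 1" \<alpha> \<beta>] assms
    by (simp add: pointwise nn_integral_multc nn_integral_add)
  also have "\<dots> = ennreal (((\<beta> - \<alpha>) powr (a + 1) / (a + 1) + (\<beta> - \<alpha>) powr (a + 1) / (a + 1)) * (1 / a))"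
    using a by (simp flip: ennreal_plus ennreal_mult)
  also have "\<dots> = ennreal (2 * (\<beta> - \<alpha>) powr (a + 1) / (a * (a + 1)))"
    by (simp add: mult.commute)
  finally show ?thesis .
qed

lemma nn_integral_abs_powr_class_average:
  assumes a: "a > 0"
  shows "ennreal (1 / class_length t)
           * (\<integral>\<^sup>+s. indicator E (s, t) * (\<integral>\<^sup>+u. indicator E (s, u) * ennreal (\<bar>u - s\<bar> powr (a - 1)) \<partial>lborel) \<partial>lborel)
       = ennreal (2 / (a * (a + 1))) * ennreal (class_length t powr a)"
proof (cases t rule: class_cases)
  case 1
  then have "(s, t) \<notin> E" for s using sym_E by (auto dest: symD)
  with 1 show ?thesis by simp
next
  case (2 \<alpha> \<beta>)
  then have "ennreal (1 / class_length t)
        * (\<integral>\<^sup>+s. indicator E (s, t) * (\<integral>\<^sup>+u. indicator E (s, u) * ennreal (\<bar>u - s\<bar> powr (a - 1)) \<partial>lborel) \<partial>lborel)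
      = ennreal (1 / (\<beta> - \<alpha>) * (2 * (\<beta> - \<alpha>) powr (a + 1) / (a * (a + 1))))"
    using a by (simp add: nn_integral_abs_powr_class_square flip: ennreal_mult)
  also have "\<dots> = ennreal (2 / (a * (a + 1)) * (\<beta> - \<alpha>) powr a)"
  proof (cases "\<alpha> = \<beta>")
    case False
    then have "(\<beta> - \<alpha>) powr (a + 1) = (\<beta> - \<alpha>) * (\<beta> - \<alpha>) powr a"
      using 2 by (simp add: powr_add)
    with False show ?thesis by simp
  qed simp
  finally show ?thesis
    using 2 a by (simp flip: ennreal_mult)
qed

lemma nn_integral_abs_powr_classes:
  assumes a: "a > 0"
  shows "ennreal (a * (a + 1)) * (\<integral>\<^sup>+p. indicator E p * ennreal (\<bar>snd p - fst p\<bar> powr (a - 1)) \<partial>lborel)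
       = 2 * (\<integral>\<^sup>+s. ennreal (class_length s powr a) \<partial>lborel)"
proof -
  define K where "K s = (\<integral>\<^sup>+t. indicator E (s, t) * ennreal (\<bar>t - s\<bar> powr (a - 1)) \<partial>lborel)" for s
  have K_measurable [measurable]: "K \<in> borel_measurable borel"
    unfolding K_def by measurable
  have K_null: "K s = 0" if "class_length s = 0" for s
  proof (cases s rule: class_cases)
    case 1
    then show ?thesis by (simp add: K_def indicator_class)
  next
    case (2 \<alpha> \<beta>)
    then show ?thesis using that nn_integral_abs_powr_class[OF a 2(1-3)] by (simp add: K_def)
  qed
  have "(\<integral>\<^sup>+p. indicator E p * ennreal (\<bar>snd p - fst p\<bar> powr (a - 1)) \<partial>lborel) = (\<integral>\<^sup>+s. K s \<partial>lborel)"
    unfolding K_def lborel_prod[symmetric]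
    by (subst lborel.nn_integral_fst[symmetric]) measurable
  also have "\<dots> = (\<integral>\<^sup>+t. ennreal (2 / (a * (a + 1))) * ennreal (class_length t powr a) \<partial>lborel)"
    using K_null by (subst nn_integral_by_classes) (simp_all add: nn_integral_abs_powr_class_average[OF a, folded K_def])
  also have "\<dots> = ennreal (2 / (a * (a + 1))) * (\<integral>\<^sup>+s. ennreal (class_length s powr a) \<partial>lborel)"
    by (simp add: nn_integral_cmult)
  finally show ?thesis
    using a by (simp add: ennreal_mult[symmetric] mult.assoc[symmetric])
qed

end

text \<open>The superlevel relation \<open>m_h(s,t) \<ge> r\<close> on the unit square, written without the infimum
  (see \<open>le_mh_iff\<close>).\<close>

definition level_rel :: "(real \<Rightarrow> real) \<Rightarrow> real \<Rightarrow> real rel" where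
  "level_rel h r = {(s, t). s \<in> {0..1} \<and> t \<in> {0..1} \<and> (\<forall>v\<in>{min s t..max s t}. r \<le> h v)}"

lemma level_rel_unit_square: "(s, t) \<in> level_rel h r \<Longrightarrow> s \<in> {0..1} \<and> t \<in> {0..1}"
  by (simp add: level_rel_def)

lemma level_rel_le: "(s, t) \<in> level_rel h r \<Longrightarrow> r \<le> h s"
  by (auto simp: level_rel_def)

lemma sym_level_rel: "sym (level_rel h r)"
  by (auto intro!: symI simp: level_rel_def min.commute max.commute)

lemma trans_level_rel: "trans (level_rel h r)"
proof (rule transI)
  fix s t u assume "(s, t) \<in> level_rel h r" and "(t, u) \<in> level_rel h r"
  moreover have "{min s u..max s u} \<subseteq> {min s t..max s t} \<union> {min t u..max t u}"
    by (auto simp: min_def max_def)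
  ultimately show "(s, u) \<in> level_rel h r"
    by (auto simp: level_rel_def)
qed

lemma level_rel_subinterval:
  "(s, t) \<in> level_rel h r \<Longrightarrow> s \<le> x \<Longrightarrow> x \<le> t \<Longrightarrow> (s, x) \<in> level_rel h r"
  by (auto simp: level_rel_def)

lemma closed_level_rel:
  assumes h: "continuous_on {0..1} h"
  shows "closed (SIGMA r:UNIV. level_rel h r)"
proof -
  define D :: "(real \<times> real \<times> real) set" where "D = UNIV \<times> {0..1} \<times> {0..1}"
  define z where "z u x = (snd (snd x) - fst (snd x)) * u + fst (snd x)" for u :: real and x :: "real \<times> real \<times> real"
  have segment: "{min s t..max s t} = (\<lambda>u. (t - s) * u + s) ` {0..1}" for s t :: real
    by (simp add: closed_segment_real_eq[symmetric] closed_segment_eq_real_ivl min_def max_def)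
  \<comment> \<open>Parametrising the segment between \<open>s\<close> and \<open>t\<close> by \<open>u \<in> [0,1]\<close> makes the set an
      intersection of closed sets.\<close>
  have "(SIGMA r:UNIV. level_rel h r) = D \<inter> (\<Inter>u\<in>{0..1}. {x \<in> D. fst x \<le> h (z u x)})"
    by (auto simp: level_rel_def D_def z_def segment)
  moreover have "closed {x \<in> D. fst x \<le> h (z u x)}" if "u \<in> {0..1}" for u
  proof (rule continuous_on_closed_Collect_le)
    have "z u ` D \<subseteq> {0..1}"
    proof clarify
      fix x assume "x \<in> D"
      then have "closed_segment (fst (snd x)) (snd (snd x)) \<subseteq> {0..1}"
        by (intro closed_segment_subset) (auto simp: D_def)
      moreover have "z u x \<in> closed_segment (fst (snd x)) (snd (snd x))"
        using that by (auto simp: z_def closed_segment_real_eq)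
      ultimately show "z u x \<in> {0..1}" by blast
    qed
    then show "continuous_on D (\<lambda>x. h (z u x))"
      unfolding z_def by (intro continuous_on_compose2[OF h] continuous_intros) auto
  qed (auto simp: D_def intro!: continuous_intros closed_Times)
  moreover have "closed D"
    by (auto simp: D_def intro!: closed_Times)
  ultimately show ?thesis
    by (metis (no_types, lifting) closed_INT closed_Int atLeastAtMost_iff)
qed

lemma closed_level_rel_slice:
  assumes "continuous_on {0..1} h"
  shows "closed (level_rel h r)"
proof -
  have "level_rel h r = Pair r -` (SIGMA r:UNIV. level_rel h r)" by auto
  moreover have "closed (Pair r -` (SIGMA r:UNIV. level_rel h r))"
    by (intro continuous_closed_vimage closed_level_rel[OF assms] continuous_intros)
  ultimately show ?thesis by simp
qed

lemma level_class_interval: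
  assumes "continuous_on {0..1} h"
  shows "\<exists>\<alpha> \<beta>. level_rel h r `` {s} = {\<alpha>..\<beta>}"
proof -
  have "level_rel h r `` {s} = (\<lambda>t. (r, s, t)) -` (SIGMA r:UNIV. level_rel h r)" by auto
  moreover have "closed ((\<lambda>t. (r, s, t)) -` (SIGMA r:UNIV. level_rel h r))"
    by (intro continuous_closed_vimage closed_level_rel[OF assms] continuous_intros)
  ultimately have "closed (level_rel h r `` {s})" by simp
  moreover have "bounded (level_rel h r `` {s})"
    by (rule bounded_subset[of "{0..1}"]) (auto dest: level_rel_unit_square)
  moreover have "is_interval (level_rel h r `` {s})"
    unfolding is_interval_1
  proof clarsimp
    fix t t' x assume "(s, t) \<in> level_rel h r" "(s, t') \<in> level_rel h r" "t \<le> x" "x \<le> t'"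
    then have "(t, t') \<in> level_rel h r"
      using sym_level_rel trans_level_rel by (blast dest: symD transD)
    then have "(t, x) \<in> level_rel h r"
      using \<open>t \<le> x\<close> \<open>x \<le> t'\<close> by (rule level_rel_subinterval)
    with \<open>(s, t) \<in> level_rel h r\<close> show "(s, x) \<in> level_rel h r"
      using trans_level_rel by (blast dest: transD)
  qed
  ultimately show ?thesis
    using connected_compact_interval_1 is_interval_connected_1 compact_eq_bounded_closed by blast
qed

lemma interval_classes_level_rel:
  assumes "continuous_on {0..1} h"
  shows "interval_classes (level_rel h r)"
  using assms by unfold_locales
    (simp_all add: borel_closed closed_level_rel_slice sym_level_rel trans_level_rel level_class_interval)

lemma le_mh_iff:
  assumes "\<forall>x\<in>{0..1}. 0 \<le> h x" and "s \<in> {0..1}" and "t \<in> {0..1}"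
  shows "r \<le> mh h s t \<longleftrightarrow> (s, t) \<in> level_rel h r"
proof -
  have "{min s t..max s t} \<subseteq> {0..1}"
    using assms by auto
  then have "bdd_below (h ` {min s t..max s t})"
    using assms(1) by (intro bdd_belowI[of _ 0]) blast
  then show ?thesis
    using assms by (simp add: mh_def level_rel_def le_cINF_iff)
qed

lemma mh_nonneg:
  assumes "\<forall>x\<in>{0..1}. 0 \<le> h x" and "s \<in> {0..1}" and "t \<in> {0..1}"
  shows "0 \<le> mh h s t"
proof -
  have "{min s t..max s t} \<subseteq> {0..1}"
    using assms by auto
  then have "\<forall>v\<in>{min s t..max s t}. 0 \<le> h v"
    using assms(1) by blast
  then have "(s, t) \<in> level_rel h 0"
    using assms(2,3) by (simp add: level_rel_def)
  then show ?thesis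
    using assms by (simp add: le_mh_iff)
qed

lemma sigma_rs_eq_measure_class:
  assumes "\<forall>x\<in>{0..1}. 0 \<le> h x" and "s \<in> {0..1}"
  shows "sigma_rs r s h = measure lborel (level_rel h r `` {s})"
proof -
  have "indicator {0..1} t *\<^sub>R (if r \<le> mh h s t then 1 else 0) = (indicator (level_rel h r `` {s}) t :: real)" for t
    using assms by (cases "t \<in> {0..1}") (auto simp: le_mh_iff indicator_def dest: level_rel_unit_square)
  then show ?thesis
    by (simp add: sigma_rs_def set_lebesgue_integral_def)
qed

lemma level_class_empty_outside: "s \<notin> {0..1} \<Longrightarrow> level_rel h r `` {s} = {}"
  by (auto dest: level_rel_unit_square)

lemma level_class_empty_above: "h s < r \<Longrightarrow> level_rel h r `` {s} = {}"
  by (auto dest: level_rel_le)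

lemma measure_level_class_le_1:
  assumes "continuous_on {0..1} h"
  shows "measure lborel (level_rel h r `` {s}) \<le> 1"
proof -
  obtain \<alpha> \<beta> where interval: "level_rel h r `` {s} = {\<alpha>..\<beta>}"
    using level_class_interval[OF assms] by blast
  have "level_rel h r `` {s} \<subseteq> {0..1}"
    by (auto dest: level_rel_unit_square)
  then show ?thesis
    using interval by (cases "\<alpha> \<le> \<beta>") auto
qed

lemma borel_measurable_measure_level_class:
  assumes "continuous_on {0..1} h"
  shows "(\<lambda>(r, s). measure lborel (level_rel h r `` {s})) \<in> borel_measurable (borel \<Otimes>\<^sub>M borel)"
proof -
  define S :: "((real \<times> real) \<times> real) set" where "S = {((r, s), t). (s, t) \<in> level_rel h r}"
  have "S = (\<lambda>x. (fst (fst x), snd (fst x), snd x)) -` (SIGMA r:UNIV. level_rel h r)"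
    by (auto simp: S_def)
  moreover have "closed ((\<lambda>x. (fst (fst x), snd (fst x), snd x)) -` (SIGMA r:UNIV. level_rel h r))"
    by (intro continuous_closed_vimage closed_level_rel[OF assms] continuous_intros)
  ultimately have "closed S" by simp
  then have "(\<lambda>x. emeasure lborel (Pair x -` S)) \<in> borel_measurable lborel"
    by (intro lborel.measurable_emeasure_Pair) (subst lborel_prod, simp add: borel_closed)
  moreover have "Pair x -` S = level_rel h (fst x) `` {snd x}" for x
    by (auto simp: S_def)
  ultimately show ?thesis
    by (simp add: measure_def borel_prod case_prod_beta')
qed

lemma nn_integral_level_class_powr_finite:
  assumes h: "continuous_on {0..1} h" and a: "0 \<le> a"
  shows "(\<integral>\<^sup>+r. indicator {0..} r * ennreal (measure lborel (level_rel h r `` {s}) powr a) \<partial>lborel) \<noteq> \<infinity>"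
proof -
  have "(\<integral>\<^sup>+r. indicator {0..} r * ennreal (measure lborel (level_rel h r `` {s}) powr a) \<partial>lborel)
      \<le> (\<integral>\<^sup>+r. indicator {0..max 0 (h s)} r \<partial>lborel)"
  proof (intro nn_integral_mono)
    fix r
    have "measure lborel (level_rel h r `` {s}) powr a \<le> 1"
      using measure_level_class_le_1[OF h] a by (simp add: powr_le1)
    then show "indicator {0..} r * ennreal (measure lborel (level_rel h r `` {s}) powr a) \<le> indicator {0..max 0 (h s)} r"
      using level_class_empty_above[of h s r] by (auto simp: indicator_def)
  qed
  also have "\<dots> < \<infinity>"
    by simp
  finally show ?thesis by simp
qed

lemma integral_sigma_rs_powr_eq_nn_integral:
  assumes h: "continuous_on {0..1} h" and nonneg: "\<forall>x\<in>{0..1}. 0 \<le> h x" and "s \<in> {0..1}"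
  shows "(LINT r:{0..h s}|lborel. sigma_rs r s h powr a)
       = enn2real (\<integral>\<^sup>+r. indicator {0..} r * ennreal (measure lborel (level_rel h r `` {s}) powr a) \<partial>lborel)"
proof -
  note [measurable] = borel_measurable_measure_level_class[OF h]
  have "(LINT r:{0..h s}|lborel. sigma_rs r s h powr a)
      = (LINT r|lborel. indicator {0..h s} r * measure lborel (level_rel h r `` {s}) powr a)"
    using assms by (simp add: set_lebesgue_integral_def sigma_rs_eq_measure_class)
  also have "\<dots> = enn2real (\<integral>\<^sup>+r. ennreal (indicator {0..h s} r * measure lborel (level_rel h r `` {s}) powr a) \<partial>lborel)"
    by (rule integral_eq_nn_integral) auto
  also have "(\<integral>\<^sup>+r. ennreal (indicator {0..h s} r * measure lborel (level_rel h r `` {s}) powr a) \<partial>lborel)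
      = (\<integral>\<^sup>+r. indicator {0..} r * ennreal (measure lborel (level_rel h r `` {s}) powr a) \<partial>lborel)"
    using level_class_empty_above[of h s] by (intro nn_integral_cong) (auto simp: indicator_def not_le)
  finally show ?thesis .
qed

lemma integral_sigma_rs_powr_eq_layers:
  assumes h: "continuous_on {0..1} h" and nonneg: "\<forall>x\<in>{0..1}. 0 \<le> h x" and a: "0 \<le> a"
  shows "(LINT s:{0..1}|lborel. (LINT r:{0..h s}|lborel. sigma_rs r s h powr a))
       = enn2real (\<integral>\<^sup>+r. indicator {0..} r * (\<integral>\<^sup>+s. ennreal (measure lborel (level_rel h r `` {s}) powr a) \<partial>lborel) \<partial>lborel)"
proof -
  note [measurable] = borel_measurable_measure_level_class[OF h]
  define N where "N s = (\<integral>\<^sup>+r. indicator {0..} r * ennreal (measure lborel (level_rel h r `` {s}) powr a) \<partial>lborel)" for s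
  have [measurable]: "N \<in> borel_measurable borel"
    unfolding N_def by measurable
  have N_zero: "N s = 0" if "s \<notin> {0..1}" for s
    using that by (simp add: N_def level_class_empty_outside)
  have N_eq: "(LINT r:{0..h s}|lborel. sigma_rs r s h powr a) = enn2real (N s)" if "s \<in> {0..1}" for s
    unfolding N_def using integral_sigma_rs_powr_eq_nn_integral[OF h nonneg that] .
  have "(LINT s:{0..1}|lborel. (LINT r:{0..h s}|lborel. sigma_rs r s h powr a)) = (LINT s|lborel. enn2real (N s))"
    unfolding set_lebesgue_integral_def[of lborel "{0..1}"]
    by (intro Bochner_Integration.integral_cong) (simp_all add: N_eq N_zero indicator_def)
  also have "\<dots> = enn2real (\<integral>\<^sup>+s. N s \<partial>lborel)"
    using nn_integral_level_class_powr_finite[OF h a]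
    by (simp add: N_def integral_eq_nn_integral ennreal_enn2real_if)
  also have "(\<integral>\<^sup>+s. N s \<partial>lborel)
      = (\<integral>\<^sup>+r. \<integral>\<^sup>+s. indicator {0..} r * ennreal (measure lborel (level_rel h r `` {s}) powr a) \<partial>lborel \<partial>lborel)"
    unfolding N_def by (rule lborel_pair.Fubini') measurable
  finally show ?thesis
    by (simp add: nn_integral_cmult)
qed

lemma sets_Sigma_level_rel:
  assumes "continuous_on {0..1} h"
  shows "(SIGMA r:UNIV. level_rel h r) \<in> sets (borel \<Otimes>\<^sub>M borel)"
  unfolding borel_prod by (rule borel_closed[OF closed_level_rel[OF assms]])

lemma borel_measurable_nn_integral_level_class:
  assumes "continuous_on {0..1} h"
  shows "(\<lambda>r. \<integral>\<^sup>+s. ennreal (measure lborel (level_rel h r `` {s}) powr a) \<partial>lborel) \<in> borel_measurable borel"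
proof -
  note [measurable] = borel_measurable_measure_level_class[OF assms]
  show ?thesis by measurable
qed

lemma indicator_level_rel_eq_Sigma:
  "indicator (level_rel h r) p = indicator (SIGMA r:UNIV. level_rel h r) (r, p)"
  by (simp add: indicator_def)

lemma borel_measurable_nn_integral_level_rel:
  assumes "continuous_on {0..1} h" and [measurable]: "w \<in> borel_measurable borel"
  shows "(\<lambda>r. \<integral>\<^sup>+p. indicator (level_rel h r) p * ennreal (w p) \<partial>lborel) \<in> borel_measurable borel"
proof -
  note [measurable] = sets_Sigma_level_rel[OF assms(1)]
  show ?thesis
    unfolding indicator_level_rel_eq_Sigma by measurable
qed

lemma nn_integral_level_rel_eq_mh:
  assumes nonneg: "\<forall>x\<in>{0..1}. 0 \<le> h x"
  shows "(\<integral>\<^sup>+r. indicator {0..} r * indicator (level_rel h r) p \<partial>lborel)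
       = indicator ({0..1}\<times>{0..1}) p * ennreal (mh h (fst p) (snd p))"
proof (cases "p \<in> {0..1}\<times>{0..1}")
  case True
  then have "indicator {0..} r * indicator (level_rel h r) p = (indicator {0..mh h (fst p) (snd p)} r :: ennreal)" for r
    using nonneg by (cases p) (auto simp: indicator_def le_mh_iff)
  with True nonneg show ?thesis
    by (cases p) (simp add: mh_nonneg)
next
  case False
  then have "p \<notin> level_rel h r" for r
    by (cases p) (auto dest: level_rel_unit_square)
  with False show ?thesis by simp
qed

lemma integral_mh_eq_layers:
  fixes w :: "real \<times> real \<Rightarrow> real"
  assumes h: "continuous_on {0..1} h" and nonneg: "\<forall>x\<in>{0..1}. 0 \<le> h x"
    and [measurable]: "w \<in> borel_measurable borel" and w_nonneg: "\<And>p. 0 \<le> w p"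
  shows "(LINT p:{0..1}\<times>{0..1}|(lborel \<Otimes>\<^sub>M lborel). w p * mh h (fst p) (snd p))
       = enn2real (\<integral>\<^sup>+r. indicator {0..} r * (\<integral>\<^sup>+p. indicator (level_rel h r) p * ennreal (w p) \<partial>lborel) \<partial>lborel)"
proof -
  note [measurable] = sets_Sigma_level_rel[OF h]
  have [measurable]: "level_rel h r \<in> sets borel" for r
    by (rule borel_closed[OF closed_level_rel_slice[OF h]])
  define M where "M p = (\<integral>\<^sup>+r. indicator {0..} r * indicator (level_rel h r) p \<partial>lborel)" for p
  have [measurable]: "M \<in> borel_measurable borel"
    unfolding M_def indicator_level_rel_eq_Sigma by measurable
  have M_eq: "M p = indicator ({0..1}\<times>{0..1}) p * ennreal (mh h (fst p) (snd p))" for p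
    unfolding M_def by (rule nn_integral_level_rel_eq_mh[OF nonneg])
  have "(LINT p:{0..1}\<times>{0..1}|(lborel \<Otimes>\<^sub>M lborel). w p * mh h (fst p) (snd p))
      = (LINT p|lborel. w p * enn2real (M p))"
    unfolding set_lebesgue_integral_def lborel_prod
  proof (intro Bochner_Integration.integral_cong refl)
    fix p :: "real \<times> real"
    show "indicator ({0..1}\<times>{0..1}) p *\<^sub>R (w p * mh h (fst p) (snd p)) = w p * enn2real (M p)"
      by (cases "p \<in> {0..1}\<times>{0..1}") (simp_all add: M_eq mh_nonneg nonneg mem_Times_iff)
  qed
  also have "\<dots> = enn2real (\<integral>\<^sup>+p. ennreal (w p * enn2real (M p)) \<partial>lborel)"
    using w_nonneg by (intro integral_eq_nn_integral) auto
  also have "(\<integral>\<^sup>+p. ennreal (w p * enn2real (M p)) \<partial>lborel)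
      = (\<integral>\<^sup>+p. \<integral>\<^sup>+r. indicator {0..} r * indicator (level_rel h r) p * ennreal (w p) \<partial>lborel \<partial>lborel)"
  proof (intro nn_integral_cong)
    fix p :: "real \<times> real"
    have "ennreal (w p * enn2real (M p)) = M p * ennreal (w p)"
      by (cases "p \<in> {0..1}\<times>{0..1}") (simp_all add: M_eq w_nonneg mh_nonneg nonneg mem_Times_iff ennreal_mult' mult.commute)
    also have "\<dots> = (\<integral>\<^sup>+r. indicator {0..} r * indicator (level_rel h r) p * ennreal (w p) \<partial>lborel)"
      unfolding M_def by (rule nn_integral_multc[symmetric]) (unfold indicator_level_rel_eq_Sigma, measurable)
    finally show "ennreal (w p * enn2real (M p)) = \<dots>" .
  qed
  also have "\<dots> = (\<integral>\<^sup>+r. \<integral>\<^sup>+p. indicator {0..} r * indicator (level_rel h r) p * ennreal (w p) \<partial>lborel \<partial>lborel)"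
    by (rule lborel_pair.Fubini'[symmetric]) (unfold indicator_level_rel_eq_Sigma, measurable)
  also have "\<dots> = (\<integral>\<^sup>+r. indicator {0..} r * (\<integral>\<^sup>+p. indicator (level_rel h r) p * ennreal (w p) \<partial>lborel) \<partial>lborel)"
    by (simp add: nn_integral_cmult mult.assoc)
  finally show ?thesis .
qed

theorem lemma8p6:
  fixes h :: "real \<Rightarrow> real" and a :: real
  assumes "continuous_on {0..1} h"
    and "\<forall>x\<in>{0..1}. h x \<ge> 0"
    and "a > 0"
  shows "2 * (LINT s:{0..1}|lborel. (LINT r:{0..h s}|lborel. (sigma_rs r s h) powr a))
       = a * (a + 1) * (LINT p:{0..1::real}\<times>{0..1::real}|(lborel \<Otimes>\<^sub>M lborel).
            \<bar>snd p - fst p\<bar> powr (a - 1) * mh h (fst p) (snd p))"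
proof -
  note h = assms(1) and nonneg = assms(2) and a = assms(3)
  define w where "w p = \<bar>snd p - fst p\<bar> powr (a - 1)" for p :: "real \<times> real"
  have w_measurable: "w \<in> borel_measurable borel"
    unfolding w_def borel_prod[symmetric] by measurable
  define Z where "Z r = (\<integral>\<^sup>+s. ennreal (measure lborel (level_rel h r `` {s}) powr a) \<partial>lborel)" for r
  define W where "W r = (\<integral>\<^sup>+p. indicator (level_rel h r) p * ennreal (w p) \<partial>lborel)" for r
  have [measurable]: "Z \<in> borel_measurable borel" "W \<in> borel_measurable borel"
    unfolding Z_def[abs_def] W_def[abs_def]
    by (intro borel_measurable_nn_integral_level_class borel_measurable_nn_integral_level_rel h w_measurable)+
  have layer: "ennreal (a * (a + 1)) * W r = 2 * Z r" for r
  proof -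
    interpret interval_classes "level_rel h r"
      by (rule interval_classes_level_rel[OF h])
    show ?thesis
      using nn_integral_abs_powr_classes[OF a] by (simp add: W_def Z_def w_def class_length_def)
  qed
  have "2 * (LINT s:{0..1}|lborel. (LINT r:{0..h s}|lborel. (sigma_rs r s h) powr a))
      = enn2real (2 * (\<integral>\<^sup>+r. indicator {0..} r * Z r \<partial>lborel))"
    using integral_sigma_rs_powr_eq_layers[OF h nonneg] a by (simp add: Z_def enn2real_mult)
  also have "2 * (\<integral>\<^sup>+r. indicator {0..} r * Z r \<partial>lborel) = ennreal (a * (a + 1)) * (\<integral>\<^sup>+r. indicator {0..} r * W r \<partial>lborel)"
    by (simp add: layer mult.left_commute flip: nn_integral_cmult)
  also have "enn2real \<dots> = a * (a + 1) * (LINT p:{0..1}\<times>{0..1}|(lborel \<Otimes>\<^sub>M lborel). w p * mh h (fst p) (snd p))"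
    using integral_mh_eq_layers[OF h nonneg w_measurable] a by (simp add: W_def w_def enn2real_mult)
  finally show ?thesis
    by (simp add: w_def)
qed

end
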